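(* Let $\rho:SL(n,\mathbb R)\to SL(W)$ be a smooth homomorphism, $W$ a finite-dimensional real vector space with a Euclidean norm $|\cdot|_W$ invariant under $\rho(SO(n))$ and such that $d\rho(\xi^{T})=(d\rho(\xi))^{T}$ for all $\xi\in\mathfrak{sl}(n,\mathbb R)$. Fix $w\in W$ and let $G_w=\{g\in SL(n,\mathbb R):\rho(g)w=w\}$. Define $F:\mathcal H\to\mathbb R$ by $F(g^{T}g)=|\rho(g)w|_W^2$ for $g\in SL(n,\mathbb R)$ (well defined). If $F$ has a critical point at $H\in\mathcal H$, then the Lie algebra $\mathfrak g_w$ of $G_w$ is symmetric with respect to the inner product $\langle u,v\rangle_H=u^{T}Hv$, i.e. $H^{-1}A^{T}H\in\mathfrak g_w$ for every $A\in\mathfrak g_w$.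
   Context: $\mathcal H$ denotes the set of positive definite symmetric real $n\times n$ matrices of determinant $1$ (a smooth manifold identified with $SO(n)\backslash SL(n,\mathbb R)$ via $g\mapsto g^{T}g$); transposes on $\mathrm{End}(W)$ are with respect to $|\cdot|_W$. *)

theory Defs
  imports "HOL-Analysis.Analysis"
begin

definition SLn :: "(real^'n^'n) set" where
  "SLn = {g. det g = 1}"

definition SOn :: "(real^'n^'n) set" where
  "SOn = {k. orthogonal_matrix k \<and> det k = 1}"

definition sln :: "(real^'n^'n) set" where
  "sln = {\<xi>. trace \<xi> = 0}"

definition Hspace :: "(real^'n^'n) set" where
  "Hspace = {H. transpose H = H \<and> (\<forall>x. x \<noteq> 0 \<longrightarrow> x \<bullet> (H *v x) > 0) \<and> det H = 1}"

definition mpow :: "real^'n^'n \<Rightarrow> nat \<Rightarrow> real^'n^'n" where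
  "mpow A k = (((**) A) ^^ k) (mat 1)"

definition mexp :: "real^'n^'n \<Rightarrow> real^'n^'n" where
  "mexp A = (\<Sum>k. (1 / real (fact k)) *\<^sub>R mpow A k)"

fun iter_dd :: "('a::real_normed_vector) list \<Rightarrow> ('a \<Rightarrow> 'b::real_normed_vector) \<Rightarrow> 'a \<Rightarrow> 'b" where
  "iter_dd [] f = f"
| "iter_dd (v # vs) f = (\<lambda>x. frechet_derivative (iter_dd vs f) (at x) v)"

definition smooth_on :: "('a::real_normed_vector) set \<Rightarrow> ('a \<Rightarrow> 'b::real_normed_vector) \<Rightarrow> bool" where
  "smooth_on U f \<longleftrightarrow> open U \<and> (\<forall>vs. \<forall>x\<in>U. iter_dd vs f differentiable (at x))"

text \<open>Smoothness of a map defined on a subset S (an embedded submanifold) of a Euclidean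
  space: locally it is the restriction of a smooth map on an open set.\<close>
definition smooth_on_subset :: "('a::real_normed_vector) set \<Rightarrow> ('a \<Rightarrow> 'b::real_normed_vector) \<Rightarrow> bool" where
  "smooth_on_subset S f \<longleftrightarrow>
     (\<forall>x\<in>S. \<exists>U f'. x \<in> U \<and> smooth_on U f' \<and> (\<forall>y\<in>U \<inter> S. f' y = f y))"

definition drho :: "(real^'n^'n \<Rightarrow> real^'m^'m) \<Rightarrow> real^'n^'n \<Rightarrow> real^'m^'m" where
  "drho \<rho> \<xi> = vector_derivative (\<lambda>t. \<rho> (mexp (t *\<^sub>R \<xi>))) (at 0)"

definition stab :: "(real^'n^'n \<Rightarrow> real^'m^'m) \<Rightarrow> real^'m \<Rightarrow> (real^'n^'n) set" where
  "stab \<rho> w = {g\<in>SLn. \<rho> g *v w = w}"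

definition lie_alg :: "(real^'n^'n) set \<Rightarrow> (real^'n^'n) set" where
  "lie_alg G = {A. \<forall>t::real. mexp (t *\<^sub>R A) \<in> G}"

definition Ffun :: "(real^'n^'n \<Rightarrow> real^'m^'m) \<Rightarrow> real^'m \<Rightarrow> real^'n^'n \<Rightarrow> real" where
  "Ffun \<rho> w X = (norm (\<rho> (SOME g. g \<in> SLn \<and> transpose g ** g = X) *v w))\<^sup>2"

definition critical_point_H :: "(real^'n^'n \<Rightarrow> real) \<Rightarrow> real^'n^'n \<Rightarrow> bool" where
  "critical_point_H F H \<longleftrightarrow> H \<in> Hspace \<and>
     (\<forall>\<gamma>::real \<Rightarrow> real^'n^'n. (\<forall>t. \<gamma> t \<in> Hspace) \<and> \<gamma> 0 = H \<and> \<gamma> differentiable (at 0)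
        \<longrightarrow> ((\<lambda>t. F (\<gamma> t)) has_real_derivative 0) (at 0))"

end

theory Submission
  imports Defs
begin

text \<open>Write H = g^T g with g \<in> SL(n); conjugating by g reduces the claim to the symmetry, under
  plain transposition, of the stabilizer algebra of v = \<rho>(g) w. For C in that algebra put
  P = d\<rho>(C), so P v = 0. Criticality of F at H, tested along the curves
  t \<mapsto> (exp(tC) k g)^T (exp(tC) k g) with k \<in> SO(n), says that u \<bullet> P u = 0 on the orbit
  \<rho>(SO(n)) v. Differentiating this along exp(sK), K = (C - C^T)/2, and using
  d\<rho>(C^T) = P^T gives |P^T v|^2 = 0, so C^T also stabilizes v.\<close>

section \<open>The matrix exponential\<close>

text \<open>Square matrices as a type of their own: with the operator norm they form a real Banach
  algebra, in which mexp is the library's exp.\<close>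

typedef ('n::finite) sqmat = "UNIV :: (real^'n^'n) set"
  morphisms to_mat of_mat by auto

lemma to_mat_of_mat [simp]: "to_mat (of_mat A) = A"
  by (simp add: of_mat_inverse)

definition matrix_onorm :: "real^'n^'n \<Rightarrow> real" where
  "matrix_onorm A = onorm ((*v) A)"

lemma matrix_onorm_triangle: "matrix_onorm (A + B) \<le> matrix_onorm A + matrix_onorm B"
  unfolding matrix_onorm_def
  using onorm_triangle[OF matrix_vector_mul_bounded_linear matrix_vector_mul_bounded_linear]
  by (simp add: matrix_vector_mult_add_rdistrib[symmetric] fun_eq_iff)

lemma matrix_onorm_scaleR: "matrix_onorm (c *\<^sub>R A) = \<bar>c\<bar> * matrix_onorm A"
  unfolding matrix_onorm_def using onorm_scaleR[OF matrix_vector_mul_bounded_linear, of c A]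
  by (simp add: scaleR_matrix_vector_assoc)

lemma matrix_onorm_eq_0_iff: "matrix_onorm A = 0 \<longleftrightarrow> A = 0"
  unfolding matrix_onorm_def using onorm_eq_0[OF matrix_vector_mul_bounded_linear, of A]
  by (metis matrix_vector_mul_lid matrix_vector_mult_0 matrix_eq matrix_vector_mult_0_right)

lemma matrix_onorm_mult_le: "matrix_onorm (A ** B) \<le> matrix_onorm A * matrix_onorm B"
  unfolding matrix_onorm_def
  using onorm_compose[OF matrix_vector_mul_bounded_linear matrix_vector_mul_bounded_linear]
  by (simp add: o_def matrix_vector_mul_assoc)

lemma matrix_onorm_mat_1: "matrix_onorm (mat 1 :: real^'n^'n) = 1"
proof -
  have "(*v) (mat 1::real^'n^'n) = (\<lambda>x. x)" by (rule ext) simp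
  then show ?thesis unfolding matrix_onorm_def using onorm_id[where 'a="real^'n"] by simp
qed

lemma matrix_onorm_le_norm: "matrix_onorm (A::real^'n^'n) \<le> real CARD('n) * real CARD('n) * norm A"
  unfolding matrix_onorm_def
  by (rule onorm_le_matrix_component)
    (rule order_trans[OF component_le_norm_cart Finite_Cartesian_Product.norm_nth_le])

lemma norm_le_matrix_onorm: "norm (A::real^'n^'n) \<le> real CARD('n) * real CARD('n) * matrix_onorm A"
proof -
  have "norm A \<le> (\<Sum>i\<in>UNIV. norm (A$i))" by (simp add: norm_vec_def L2_set_le_sum)
  also have "\<dots> \<le> (\<Sum>i\<in>(UNIV::'n set). real CARD('n) * matrix_onorm A)"
  proof (rule sum_mono)
    fix i
    have "norm (A$i) \<le> (\<Sum>j\<in>UNIV. \<bar>A$i$j\<bar>)" by (rule norm_le_l1_cart)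
    also have "\<dots> \<le> (\<Sum>j\<in>(UNIV::'n set). matrix_onorm A)"
      by (rule sum_mono) (simp add: matrix_onorm_def matrix_component_le_onorm)
    finally show "norm (A$i) \<le> real CARD('n) * matrix_onorm A" by simp
  qed
  finally show ?thesis by simp
qed

lemma matrix_add_rdistrib: "(A + B) ** (C::real^'n^'n) = A ** C + B ** C"
  by (simp add: matrix_matrix_mult_def vec_eq_iff sum.distrib distrib_right)

instantiation sqmat :: (finite) real_algebra_1
begin
definition "0 = of_mat 0"
definition "1 = of_mat (mat 1)"
definition "x + y = of_mat (to_mat x + to_mat y)"
definition "x - y = of_mat (to_mat x - to_mat y)"
definition "- x = of_mat (- to_mat x)"
definition "x * y = of_mat (to_mat x ** to_mat y)"
definition "c *\<^sub>R x = of_mat (c *\<^sub>R to_mat x)"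
instance
proof
  fix x y z :: "'a sqmat" and a b :: real
  show "x + y + z = x + (y + z)" by (simp add: plus_sqmat_def add.assoc)
  show "x + y = y + x" by (simp add: plus_sqmat_def add.commute)
  show "0 + x = x" by (simp add: plus_sqmat_def zero_sqmat_def to_mat_inverse)
  show "- x + x = 0" by (simp add: plus_sqmat_def zero_sqmat_def uminus_sqmat_def)
  show "x - y = x + - y" by (simp add: plus_sqmat_def minus_sqmat_def uminus_sqmat_def)
  show "a *\<^sub>R (x + y) = a *\<^sub>R x + a *\<^sub>R y"
    by (simp add: plus_sqmat_def scaleR_sqmat_def scaleR_add_right)
  show "(a + b) *\<^sub>R x = a *\<^sub>R x + b *\<^sub>R x"
    by (simp add: plus_sqmat_def scaleR_sqmat_def scaleR_add_left)
  show "a *\<^sub>R b *\<^sub>R x = (a * b) *\<^sub>R x" by (simp add: scaleR_sqmat_def)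
  show "1 *\<^sub>R x = x" by (simp add: scaleR_sqmat_def to_mat_inverse)
  show "a *\<^sub>R x * y = a *\<^sub>R (x * y)"
    by (simp add: scaleR_sqmat_def times_sqmat_def scalar_matrix_assoc[symmetric])
  show "x * a *\<^sub>R y = a *\<^sub>R (x * y)"
    by (simp add: scaleR_sqmat_def times_sqmat_def matrix_scalar_ac scalar_matrix_assoc[symmetric])
  show "x * y * z = x * (y * z)" by (simp add: times_sqmat_def matrix_mul_assoc[symmetric])
  show "(x + y) * z = x * z + y * z"
    by (simp add: times_sqmat_def plus_sqmat_def matrix_add_rdistrib)
  show "x * (y + z) = x * y + x * z"
    by (simp add: times_sqmat_def plus_sqmat_def matrix_add_ldistrib)
  show "1 * x = x" by (simp add: times_sqmat_def one_sqmat_def to_mat_inverse)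
  show "x * 1 = x" by (simp add: times_sqmat_def one_sqmat_def to_mat_inverse)
  show "(0::'a sqmat) \<noteq> 1" unfolding zero_sqmat_def one_sqmat_def
    by (metis to_mat_of_mat matrix_onorm_eq_0_iff matrix_onorm_mat_1 zero_neq_one)
qed
end

instantiation sqmat :: (finite) real_normed_algebra_1
begin
definition "norm x = matrix_onorm (to_mat x)"
definition "sgn x = of_mat (inverse (matrix_onorm (to_mat x)) *\<^sub>R to_mat x)"
definition "dist x y = matrix_onorm (to_mat x - to_mat y)"
definition "uniformity = (INF e\<in>{0 <..}. principal {(x::'a sqmat, y). dist x y < e})"
definition "open U =
  (\<forall>x\<in>U. eventually (\<lambda>(x', y). x' = x \<longrightarrow> y \<in> U) (uniformity :: ('a sqmat \<times> 'a sqmat) filter))"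
instance
proof
  fix x y :: "'a sqmat" and a :: real
  show "sgn x = x /\<^sub>R norm x" by (simp add: sgn_sqmat_def scaleR_sqmat_def norm_sqmat_def)
  show "dist x y = norm (x - y)" by (simp add: dist_sqmat_def norm_sqmat_def minus_sqmat_def)
  show "(uniformity :: ('a sqmat \<times> 'a sqmat) filter) = (INF e\<in>{0 <..}. principal {(x, y). dist x y < e})"
    by (simp add: uniformity_sqmat_def)
  show "open U = (\<forall>x\<in>U. \<forall>\<^sub>F (x', y) in uniformity. x' = x \<longrightarrow> y \<in> U)" for U :: "'a sqmat set"
    by (simp add: open_sqmat_def)
  show "(norm x = 0) = (x = 0)"
    unfolding norm_sqmat_def zero_sqmat_def matrix_onorm_eq_0_iff by (metis to_mat_inverse to_mat_of_mat)
  show "norm (x + y) \<le> norm x + norm y" by (simp add: norm_sqmat_def plus_sqmat_def matrix_onorm_triangle)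
  show "norm (a *\<^sub>R x) = \<bar>a\<bar> * norm x" by (simp add: norm_sqmat_def scaleR_sqmat_def matrix_onorm_scaleR)
  show "norm (x * y) \<le> norm x * norm y" by (simp add: norm_sqmat_def times_sqmat_def matrix_onorm_mult_le)
  show "norm (1::'a sqmat) = 1" by (simp add: norm_sqmat_def one_sqmat_def matrix_onorm_mat_1)
qed
end

lemma to_mat_add [simp]: "to_mat (x + y) = to_mat x + to_mat y" by (simp add: plus_sqmat_def)
lemma to_mat_mult [simp]: "to_mat (x * y) = to_mat x ** to_mat y" by (simp add: times_sqmat_def)
lemma to_mat_scaleR [simp]: "to_mat (c *\<^sub>R x) = c *\<^sub>R to_mat x" by (simp add: scaleR_sqmat_def)
lemma to_mat_1 [simp]: "to_mat 1 = mat 1" by (simp add: one_sqmat_def)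

lemma of_mat_add: "of_mat (A + B) = of_mat A + of_mat B" by (simp add: plus_sqmat_def)
lemma of_mat_mult: "of_mat (A ** B) = of_mat A * of_mat B" by (simp add: times_sqmat_def)
lemma of_mat_scaleR: "of_mat (c *\<^sub>R A) = c *\<^sub>R of_mat A" by (simp add: scaleR_sqmat_def)
lemma of_mat_0: "of_mat 0 = 0" by (simp add: zero_sqmat_def)
lemma of_mat_mat_1: "of_mat (mat 1) = 1" by (simp add: one_sqmat_def)

lemma bounded_linear_to_mat: "bounded_linear (to_mat :: 'n::finite sqmat \<Rightarrow> real^'n^'n)"
proof
  show "\<exists>K. \<forall>x::'n sqmat. norm (to_mat x) \<le> norm x * K"
    by (rule exI[of _ "real CARD('n) * real CARD('n)"])
      (metis norm_sqmat_def norm_le_matrix_onorm mult.commute)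
qed simp_all

lemma bounded_linear_of_mat: "bounded_linear (of_mat :: real^'n^'n \<Rightarrow> 'n::finite sqmat)"
proof
  show "\<exists>K. \<forall>x::real^'n^'n. norm (of_mat x) \<le> norm x * K"
    by (rule exI[of _ "real CARD('n) * real CARD('n)"])
      (metis to_mat_of_mat norm_sqmat_def matrix_onorm_le_norm mult.commute)
qed (simp_all add: of_mat_add of_mat_scaleR)

instance sqmat :: (finite) banach
proof
  fix X :: "nat \<Rightarrow> 'a sqmat" assume "Cauchy X"
  then have "Cauchy (\<lambda>n. to_mat (X n))" by (rule bounded_linear.Cauchy[OF bounded_linear_to_mat])
  then obtain L where "(\<lambda>n. to_mat (X n)) \<longlonglongrightarrow> L" using Cauchy_convergent convergent_def by blast
  then have "(\<lambda>n. of_mat (to_mat (X n))) \<longlonglongrightarrow> of_mat L"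
    by (rule bounded_linear.tendsto[OF bounded_linear_of_mat])
  then show "convergent X" by (auto simp: to_mat_inverse convergent_def)
qed

lemma to_mat_power: "to_mat (x ^ k) = mpow (to_mat x) k"
  by (induct k) (simp_all add: mpow_def)

lemma sums_to_mat_exp: "(\<lambda>k. (1 / real (fact k)) *\<^sub>R mpow A k) sums to_mat (exp (of_mat A))"
proof -
  have "(\<lambda>k. to_mat (of_mat A ^ k /\<^sub>R fact k)) sums to_mat (exp (of_mat A))"
    by (rule bounded_linear.sums[OF bounded_linear_to_mat exp_converges])
  then show ?thesis by (simp add: to_mat_power divide_inverse_commute)
qed

lemma mexp_eq_exp: "mexp A = to_mat (exp (of_mat A))"
  unfolding mexp_def using sums_to_mat_exp sums_unique by metis

lemma sums_mexp: "(\<lambda>k. (1 / real (fact k)) *\<^sub>R mpow A k) sums mexp A"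
  using sums_to_mat_exp by (simp add: mexp_eq_exp)

lemma mexp_add_commuting: "A ** B = B ** A \<Longrightarrow> mexp (A + B) = mexp A ** mexp B"
  unfolding mexp_eq_exp of_mat_add by (metis to_mat_mult of_mat_mult exp_add_commuting)

lemma mexp_0 [simp]: "mexp 0 = mat 1"
  by (simp add: mexp_eq_exp of_mat_0)

lemma mexp_scaleR_add: "mexp ((s + t) *\<^sub>R X) = mexp (s *\<^sub>R X) ** mexp (t *\<^sub>R X)"
  by (simp add: scaleR_add_left mexp_add_commuting matrix_scalar_ac scalar_matrix_assoc[symmetric])

lemma mexp_uminus_mult: "mexp (- X) ** mexp X = mat 1"
proof -
  have "(- X) ** X = X ** (- X)" by (simp add: matrix_matrix_mult_def vec_eq_iff sum_negf)
  then have "mexp (- X + X) = mexp (- X) ** mexp X" by (rule mexp_add_commuting)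
  then show ?thesis by simp
qed

lemma has_vector_derivative_mexp:
  "((\<lambda>t. mexp (t *\<^sub>R X)) has_vector_derivative mexp (t *\<^sub>R X) ** X) (at t)"
proof -
  have "((\<lambda>t. to_mat (exp (t *\<^sub>R of_mat X))) has_vector_derivative
      to_mat (exp (t *\<^sub>R of_mat X) * of_mat X)) (at t)"
    by (rule bounded_linear.has_vector_derivative[OF bounded_linear_to_mat
          exp_scaleR_has_vector_derivative_right])
  then show ?thesis by (simp add: mexp_eq_exp of_mat_scaleR)
qed

lemma continuous_on_mexp: "continuous_on UNIV (\<lambda>t. mexp (t *\<^sub>R X))"
  by (rule continuous_on_vector_derivative)
    (rule has_vector_derivative_at_within[OF has_vector_derivative_mexp])

lemma mpow_commute: "mpow A k ** A = A ** mpow A k"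
proof -
  have "to_mat (of_mat A ^ k * of_mat A) = to_mat (of_mat A * of_mat A ^ k)"
    by (simp add: power_commutes)
  then show ?thesis by (simp add: to_mat_power)
qed

lemma mpow_transpose: "mpow (transpose A) k = transpose (mpow A k)"
proof (induct k)
  case (Suc k)
  then show ?case by (simp add: mpow_def matrix_transpose_mul) (metis mpow_def mpow_commute)
qed (simp add: mpow_def)

lemma bounded_linear_transpose: "bounded_linear (transpose :: real^'n^'m \<Rightarrow> real^'m^'n)"
proof -
  have "linear (transpose :: real^'n^'m \<Rightarrow> real^'m^'n)"
    by (rule linearI) (simp_all add: transpose_def vec_eq_iff)
  then show ?thesis by (simp add: linear_conv_bounded_linear)
qed

lemma mexp_transpose: "mexp (transpose X) = transpose (mexp X)"
proof -
  have "(\<lambda>k. transpose ((1 / real (fact k)) *\<^sub>R mpow X k)) sums transpose (mexp X)"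
    by (rule bounded_linear.sums[OF bounded_linear_transpose sums_mexp])
  then have "(\<lambda>k. (1 / real (fact k)) *\<^sub>R mpow (transpose X) k) sums transpose (mexp X)"
    by (simp add: mpow_transpose transpose_scalar)
  then show ?thesis using sums_mexp sums_unique2 by blast
qed

lemma mexp_similar:
  fixes P Q X :: "real^'n::finite^'n"
  assumes "Q ** P = mat 1"
  shows "mexp (P ** X ** Q) = P ** mexp X ** Q"
proof -
  define p q x where "p = of_mat P" "q = of_mat Q" "x = of_mat X"
  have "P ** Q = mat 1" using assms matrix_left_right_inverse by blast
  then have pq: "p * q = 1" "q * p = 1"
    using assms by (simp_all add: p_q_x_def of_mat_mult[symmetric] of_mat_mat_1)
  have pow: "(p * x * q) ^ k = p * x ^ k * q" for k
  proof (induct k)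
    case (Suc k)
    have "(p * x * q) ^ Suc k = (p * x * q) * (p * x ^ k * q)" by (simp only: power_Suc Suc)
    also have "\<dots> = p * x * (q * p) * x ^ k * q" by (simp add: mult.assoc)
    finally show ?case using pq by (simp add: mult.assoc)
  qed (simp add: pq)
  have "(\<lambda>k. p * (x ^ k /\<^sub>R fact k) * q) sums (p * exp x * q)"
    by (rule bounded_linear.sums[OF bounded_linear_mult_left
          bounded_linear.sums[OF bounded_linear_mult_right exp_converges]])
  then have "(\<lambda>k. (p * x * q) ^ k /\<^sub>R fact k) sums (p * exp x * q)" by (simp add: pow)
  then have "exp (p * x * q) = p * exp x * q" using exp_converges sums_unique2 by blast
  then show ?thesis by (simp add: mexp_eq_exp p_q_x_def of_mat_mult)
qed

section \<open>Inverses, SL(n) and its Lie algebra\<close>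

lemma
  assumes "invertible A"
  shows matrix_inv_right: "A ** matrix_inv A = mat 1"
    and matrix_inv_left: "matrix_inv A ** A = mat 1"
proof -
  have "A ** matrix_inv A = mat 1 \<and> matrix_inv A ** A = mat 1"
    using assms unfolding invertible_def matrix_inv_def by (rule someI_ex)
  then show "A ** matrix_inv A = mat 1" "matrix_inv A ** A = mat 1" by auto
qed

lemma matrix_inv_unique:
  fixes A B :: "real^'n^'n"
  assumes "A ** B = mat 1"
  shows "matrix_inv A = B"
proof -
  have "invertible A" using assms invertible_right_inverse by blast
  then have "matrix_inv A ** (A ** B) = B" by (simp add: matrix_mul_assoc matrix_inv_left)
  then show ?thesis using assms by simp
qed

lemma matrix_inv_matrix_inv:
  fixes A :: "real^'n^'n"
  assumes "invertible A"
  shows "matrix_inv (matrix_inv A) = A"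
  by (rule matrix_inv_unique) (rule matrix_inv_left[OF assms])

lemma matrix_inv_transpose_mult:
  fixes g :: "real^'n^'n"
  assumes "invertible g"
  shows "matrix_inv (transpose g ** g) = matrix_inv g ** transpose (matrix_inv g)"
proof (rule matrix_inv_unique)
  have "transpose g ** g ** (matrix_inv g ** transpose (matrix_inv g))
      = transpose g ** (g ** matrix_inv g) ** transpose (matrix_inv g)"
    by (simp add: matrix_mul_assoc)
  also have "\<dots> = transpose (matrix_inv g ** g)"
    using assms by (simp add: matrix_inv_right matrix_transpose_mul)
  finally show "transpose g ** g ** (matrix_inv g ** transpose (matrix_inv g)) = mat 1"
    using assms by (simp add: matrix_inv_left)
qed

lemma mat_1_in_SLn: "mat 1 \<in> SLn"
  by (simp add: SLn_def)

lemma SLn_mult: "g \<in> SLn \<Longrightarrow> h \<in> SLn \<Longrightarrow> g ** h \<in> SLn"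
  by (simp add: SLn_def det_mul)

lemma SLn_invertible: "g \<in> SLn \<Longrightarrow> invertible g"
  by (simp add: SLn_def invertible_det_nz)

lemma matrix_inv_in_SLn:
  assumes "g \<in> SLn"
  shows "matrix_inv g \<in> SLn"
proof -
  have "det g * det (matrix_inv g) = 1"
    using matrix_inv_right[OF SLn_invertible[OF assms]] by (metis det_I det_mul)
  then show ?thesis using assms by (simp add: SLn_def)
qed

lemma SOn_subset_SLn: "SOn \<subseteq> SLn"
  by (auto simp: SOn_def SLn_def)

lemma stab_subset_SLn: "stab \<rho> w \<subseteq> SLn"
  by (auto simp: stab_def)

lemma lie_alg_mono: "G \<subseteq> G' \<Longrightarrow> lie_alg G \<subseteq> lie_alg G'"
  by (auto simp: lie_alg_def)

lemma transpose_in_lie_alg_SLn: "\<xi> \<in> lie_alg SLn \<Longrightarrow> transpose \<xi> \<in> lie_alg SLn"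
  by (simp add: lie_alg_def SLn_def det_transpose mexp_transpose flip: transpose_scalar)

lemma skew_in_lie_alg_SOn:
  assumes "transpose K = - K"
  shows "K \<in> lie_alg SOn"
  unfolding lie_alg_def mem_Collect_eq
proof
  fix s :: real
  have "transpose (mexp (s *\<^sub>R K)) = mexp (- (s *\<^sub>R K))"
    using assms by (simp add: transpose_scalar flip: mexp_transpose)
  then have orth: "orthogonal_matrix (mexp (s *\<^sub>R K))"
    by (simp add: orthogonal_matrix mexp_uminus_mult)
  have "det (mexp (s *\<^sub>R K)) = det (mexp ((s/2) *\<^sub>R K)) * det (mexp ((s/2) *\<^sub>R K))"
    using mexp_scaleR_add[of "s/2" "s/2" K] by (simp flip: det_mul)
  then have "det (mexp (s *\<^sub>R K)) \<ge> 0" by simp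
  then have "det (mexp (s *\<^sub>R K)) = 1" using det_orthogonal_matrix[OF orth] by auto
  then show "mexp (s *\<^sub>R K) \<in> SOn" using orth by (simp add: SOn_def)
qed

lemma permutes_nonid_moves_other:
  assumes "p permutes (UNIV::'n set)" "p \<noteq> id"
  obtains j where "j \<noteq> i" "p j \<noteq> j"
proof -
  obtain j0 where j0: "p j0 \<noteq> j0" using assms(2) by (metis eq_id_iff)
  have "p (p j0) \<noteq> p j0" using j0 permutes_inj[OF assms(1)] by (metis injD)
  then show ?thesis using j0 that by metis
qed

lemma has_real_derivative_det_at_mat_1:
  fixes E :: "real \<Rightarrow> real^'n::finite^'n"
  assumes E': "(E has_vector_derivative A) (at 0)" and E0: "E 0 = mat 1"
  shows "((\<lambda>t. det (E t)) has_real_derivative trace A) (at 0)"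
proof -
  have entry: "((\<lambda>t. E t $ i $ j) has_real_derivative A $ i $ j) (at 0)" for i j
    using bounded_linear.has_vector_derivative[OF bounded_linear_vec_nth
        bounded_linear.has_vector_derivative[OF bounded_linear_vec_nth E']]
    by (simp add: has_real_derivative_iff_has_vector_derivative)
  let ?P = "{p. p permutes (UNIV::'n set)}"
  let ?D = "\<lambda>p. of_int (sign p) * (\<Sum>i\<in>UNIV. A $ i $ p i * (\<Prod>j\<in>UNIV - {i}. E 0 $ j $ p j))"
  have "((\<lambda>t. det (E t)) has_real_derivative sum ?D ?P) (at 0)"
    unfolding det_def by (intro DERIV_sum DERIV_cmult has_field_derivative_prod entry)
  moreover have "sum ?D ?P = trace A"
  proof -
    have "?D p = 0" if p: "p \<in> ?P - {id}" for p
    proof -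
      have factor_0: "(\<Prod>j\<in>UNIV - {i}. E 0 $ j $ p j) = 0" for i
      proof -
        obtain j where "j \<noteq> i" "p j \<noteq> j" using permutes_nonid_moves_other[of p i] p by blast
        then show ?thesis using E0 by (intro prod_zero) (auto simp: mat_def intro!: bexI[of _ j])
      qed
      show ?thesis by (simp only: factor_0 mult_zero_right sum.neutral_const)
    qed
    then have "sum ?D (?P - {id}) = 0" by (rule sum.neutral[OF ballI])
    moreover have "sum ?D ?P = ?D id + sum ?D (?P - {id})"
      by (rule sum.remove) (simp_all add: permutes_id)
    moreover have "(\<Prod>j\<in>UNIV - {i}. E 0 $ j $ id j) = 1" for i using E0 by (simp add: mat_def)
    ultimately show ?thesis by (simp add: sign_id trace_def)
  qed
  ultimately show ?thesis by simp
qed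

lemma lie_alg_SLn_subset_sln: "lie_alg SLn \<subseteq> sln"
proof
  fix A :: "real^'n^'n" assume "A \<in> lie_alg SLn"
  then have "(\<lambda>t. det (mexp (t *\<^sub>R A))) = (\<lambda>t. 1)" by (simp add: lie_alg_def SLn_def)
  moreover have "((\<lambda>t. det (mexp (t *\<^sub>R A))) has_real_derivative trace A) (at 0)"
    using has_vector_derivative_mexp[of A 0] by (intro has_real_derivative_det_at_mat_1) simp_all
  ultimately have "trace A = 0" using DERIV_const DERIV_unique by metis
  then show "A \<in> sln" by (simp add: sln_def)
qed

section \<open>Positive definite matrices as g^T g\<close>

definition orthonormal_wrt :: "real^'n^'n \<Rightarrow> (real^'n) set \<Rightarrow> bool" where
  "orthonormal_wrt H S \<longleftrightarrow> (\<forall>x\<in>S. \<forall>y\<in>S. x \<bullet> (H *v y) = (if x = y then 1 else 0))"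

lemma orthonormal_wrt_independent:
  assumes "orthonormal_wrt H S"
  shows "independent S"
proof
  assume "dependent S"
  then obtain a where a: "a \<in> S" "a \<in> span (S - {a})" unfolding dependent_def by blast
  have "a \<bullet> (H *v y) = 0" if "y \<in> span (S - {a})" for y
    using that
  proof (induct rule: span_induct)
    case base then show ?case
      by (auto simp: subspace_def matrix_vector_right_distrib inner_add_right
          matrix_vector_mult_scaleR inner_scaleR_right)
  next
    case (step x) then show ?case using assms a(1) unfolding orthonormal_wrt_def by auto
  qed
  then have "a \<bullet> (H *v a) = 0" using a by blast
  moreover have "a \<bullet> (H *v a) = 1" using assms a(1) unfolding orthonormal_wrt_def by auto
  ultimately show False by simp
qed

lemma orthonormal_wrt_finite_card_le:
  "orthonormal_wrt H (S::(real^'n) set) \<Longrightarrow> finite S \<and> card S \<le> CARD('n)"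
  using independent_bound[OF orthonormal_wrt_independent] by simp

lemma symmetric_matrix_form_commute:
  fixes H :: "real^'n^'n"
  assumes "transpose H = H"
  shows "x \<bullet> (H *v y) = y \<bullet> (H *v x)"
proof -
  have "x \<bullet> (H *v y) = (x v* H) \<bullet> y" by (rule dot_lmul_matrix[symmetric])
  also have "x v* H = H *v x" using assms by (metis transpose_matrix_vector)
  finally show ?thesis by (simp add: inner_commute)
qed

lemma orthonormal_wrt_residual_orthogonal:
  assumes S: "orthonormal_wrt H S" and fin: "finite S" and s': "s' \<in> S"
  shows "s' \<bullet> (H *v (v - (\<Sum>s\<in>S. (s \<bullet> (H *v v)) *\<^sub>R s))) = 0"
proof -
  have "s' \<bullet> (H *v (\<Sum>s\<in>S. (s \<bullet> (H *v v)) *\<^sub>R s))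
      = (\<Sum>s\<in>S. (s \<bullet> (H *v v)) * (s' \<bullet> (H *v s)))"
    by (simp add: inner_sum_right matrix_vector_mult_scaleR inner_scaleR_right
        linear_sum[OF matrix_vector_mul_linear])
  also have "\<dots> = (\<Sum>s\<in>S. if s = s' then s \<bullet> (H *v v) else 0)"
    using S s' unfolding orthonormal_wrt_def by (intro sum.cong) auto
  also have "\<dots> = s' \<bullet> (H *v v)" using fin s' by simp
  finally show ?thesis by (simp add: matrix_vector_mult_diff_distrib inner_diff_right)
qed

lemma orthonormal_wrt_extend:
  fixes H :: "real^'n^'n"
  assumes sym: "transpose H = H" and pd: "\<And>x. x \<noteq> 0 \<Longrightarrow> x \<bullet> (H *v x) > 0"
    and S: "orthonormal_wrt H S" and lt: "card S < CARD('n)"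
  obtains S' where "orthonormal_wrt H S'" "card S' = Suc (card S)"
proof -
  have fin: "finite S" using orthonormal_wrt_finite_card_le[OF S] by simp
  have "span S \<noteq> UNIV"
  proof
    assume "span S = UNIV"
    then have "dim (span S) = CARD('n)" by simp
    then have "card S = CARD('n)"
      using dim_eq_card_independent[OF orthonormal_wrt_independent[OF S]] dim_span by simp
    then show False using lt by simp
  qed
  then obtain v where v: "v \<notin> span S" by blast
  define u where "u = v - (\<Sum>s\<in>S. (s \<bullet> (H *v v)) *\<^sub>R s)"
  have "(\<Sum>s\<in>S. (s \<bullet> (H *v v)) *\<^sub>R s) \<in> span S"
    by (intro span_sum span_mul span_base)
  then have u0: "u \<noteq> 0" using v unfolding u_def by (metis eq_iff_diff_eq_0)
  have orth: "s' \<bullet> (H *v u) = 0" if "s' \<in> S" for s'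
    unfolding u_def using S fin that by (rule orthonormal_wrt_residual_orthogonal)
  define c where "c = u \<bullet> (H *v u)"
  have c0: "c > 0" using pd[OF u0] c_def by simp
  define u' where "u' = (1 / sqrt c) *\<^sub>R u"
  have u'u': "u' \<bullet> (H *v u') = 1"
    using c0 unfolding u'_def c_def
    by (simp add: matrix_vector_mult_scaleR inner_scaleR_right inner_scaleR_left)
  have orth': "s \<bullet> (H *v u') = 0" "u' \<bullet> (H *v s) = 0" if "s \<in> S" for s
    using orth[OF that] symmetric_matrix_form_commute[OF sym, of s u'] unfolding u'_def
    by (simp_all add: matrix_vector_mult_scaleR inner_scaleR_right)
  have notin: "u' \<notin> S" using orth' u'u' by force
  have "orthonormal_wrt H (insert u' S)"
    using S u'u' orth' notin unfolding orthonormal_wrt_def by auto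
  moreover have "card (insert u' S) = Suc (card S)" using fin notin by simp
  ultimately show ?thesis using that by blast
qed

lemma orthonormal_wrt_basis_exists:
  fixes H :: "real^'n^'n"
  assumes sym: "transpose H = H" and pd: "\<And>x. x \<noteq> 0 \<Longrightarrow> x \<bullet> (H *v x) > 0"
  obtains S where "orthonormal_wrt H S" "card S = CARD('n)"
proof -
  have "k \<le> CARD('n) \<Longrightarrow> \<exists>S. orthonormal_wrt H S \<and> card S = k" for k
  proof (induct k)
    case 0 then show ?case by (intro exI[of _ "{}"]) (simp add: orthonormal_wrt_def)
  next
    case (Suc k)
    then obtain S where "orthonormal_wrt H S" "card S = k" by auto
    then show ?case using orthonormal_wrt_extend[OF sym pd, of S] Suc.prems by (metis Suc_le_lessD)
  qed
  then show ?thesis using that by blast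
qed

lemma transpose_mult_self_in_Hspace:
  fixes g :: "real^'n^'n"
  assumes "g \<in> SLn"
  shows "transpose g ** g \<in> Hspace"
proof -
  have "inj ((*v) g)" using SLn_invertible[OF assms] by (rule inj_matrix_vector_mult)
  then have "g *v x \<noteq> 0" if "x \<noteq> 0" for x using that by (metis injD matrix_vector_mult_0_right)
  moreover have "x \<bullet> ((transpose g ** g) *v x) = (g *v x) \<bullet> (g *v x)" for x
    by (simp add: dot_lmul_matrix[symmetric] inner_commute flip: matrix_vector_mul_assoc)
  ultimately show ?thesis
    using assms by (simp add: Hspace_def SLn_def matrix_transpose_mul det_mul)
qed

lemma Hspace_imp_transpose_mult_self:
  fixes H :: "real^'n^'n"
  assumes "H \<in> Hspace"
  obtains g where "det g = 1 \<or> det g = -1" "transpose g ** g = H"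
proof -
  have sym: "transpose H = H" and pd: "\<And>x. x \<noteq> 0 \<Longrightarrow> x \<bullet> (H *v x) > 0" and dH: "det H = 1"
    using assms by (auto simp: Hspace_def)
  obtain S where S: "orthonormal_wrt H S" "card S = CARD('n)"
    using orthonormal_wrt_basis_exists[OF sym pd] by blast
  have "finite S" using orthonormal_wrt_finite_card_le[OF S(1)] by simp
  then obtain f where f: "bij_betw f (UNIV::'n set) S"
    using S(2) finite_same_card_bij[of "UNIV::'n set" S] by auto
  define P :: "real^'n^'n" where "P = (\<chi> i j. f j $ i)"
  have "(transpose P ** H ** P) $ i $ j = f i \<bullet> (H *v f j)" for i j
    by (simp add: P_def transpose_def matrix_matrix_mult_def matrix_vector_mult_def inner_vec_def
        sum_distrib_left sum_distrib_right mult_ac) (rule sum.swap)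
  also have "f i \<bullet> (H *v f j) = (if i = j then 1 else 0)" for i j
    using S(1) f unfolding orthonormal_wrt_def bij_betw_def inj_on_def by (auto simp: bij_betwE)
  finally have PHP: "transpose P ** H ** P = mat 1" by (simp add: vec_eq_iff mat_def)
  define g where "g = transpose P ** H"
  have "g ** P = mat 1" using PHP by (simp add: g_def)
  then have "P ** g = mat 1" by (simp add: matrix_left_right_inverse)
  moreover have "transpose g ** g = H ** (P ** g)"
    by (simp add: g_def matrix_transpose_mul sym matrix_mul_assoc)
  ultimately have "transpose g ** g = H" by simp
  moreover from this have "det g * det g = 1" using dH by (metis det_mul det_transpose)
  then have "det g = 1 \<or> det g = -1" by (simp add: square_eq_1_iff)
  ultimately show ?thesis using that by blast
qed

lemma transpose_mult_self_negate_row: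
  fixes A :: "real^'n^'n" and k :: 'n
  defines "A' \<equiv> \<chi> i. if i = k then - A $ i else A $ i"
  shows "transpose A' ** A' = transpose A ** A" and "det A' = - det A"
proof -
  show "transpose A' ** A' = transpose A ** A"
    by (auto simp: A'_def matrix_matrix_mult_def transpose_def vec_eq_iff intro!: sum.cong)
  have "A' = (\<chi> i. if i = k then (- 1) *s A $ i else A $ i)"
    by (simp add: A'_def vec_eq_iff)
  then show "det A' = - det A"
    using det_row_mul[of k "- 1" "\<lambda>i. A $ i" "\<lambda>i. A $ i"] by simp
qed

lemma Hspace_eq: "Hspace = (\<lambda>g. transpose g ** g) ` SLn"
proof (intro equalityI subsetI)
  fix H :: "real^'n^'n" assume "H \<in> Hspace"
  then obtain g where g: "det g = 1 \<or> det g = -1" "transpose g ** g = H"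
    by (rule Hspace_imp_transpose_mult_self)
  obtain k :: 'n where True by blast
  define g' where "g' = (\<chi> i. if i = k then - g $ i else g $ i)"
  have g': "transpose g' ** g' = H" "det g' = - det g"
    using transpose_mult_self_negate_row[where A = g and k = k] g(2) by (simp_all add: g'_def)
  have "g \<in> SLn \<or> g' \<in> SLn" using g(1) g'(2) by (auto simp: SLn_def)
  then obtain h where "h \<in> SLn" "transpose h ** h = H" using g(2) g'(1) by blast
  then show "H \<in> (\<lambda>g. transpose g ** g) ` SLn" by (rule rev_image_eqI[OF _ sym])
qed (auto intro: transpose_mult_self_in_Hspace)

section \<open>Differentiating a representation of SL(n)\<close>

lemma bounded_linear_matrix_vector_mult_left: "bounded_linear (\<lambda>A::real^'n^'m. A *v v)"
proof -
  have "linear (\<lambda>A::real^'n^'m. A *v v)"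
    by (rule linearI) (simp_all add: matrix_vector_mult_add_rdistrib scaleR_matrix_vector_assoc)
  then show ?thesis by (simp add: linear_conv_bounded_linear)
qed

lemma bounded_bilinear_matrix_mult: "bounded_bilinear (\<lambda>A B::real^'n^'n. A ** B)"
proof -
  have "bilinear (\<lambda>A B::real^'n^'n. A ** B)"
    by (simp add: bilinear_def linear_iff matrix_add_ldistrib matrix_add_rdistrib matrix_scalar_ac
        scalar_matrix_assoc[symmetric])
  then show ?thesis using bilinear_conv_bounded_bilinear by blast
qed

lemma has_real_derivative_quadratic_form:
  fixes x :: "real \<Rightarrow> real^'n" and P :: "real^'n^'n"
  assumes "(x has_vector_derivative x') (at t)"
  shows "((\<lambda>s. x s \<bullet> (P *v x s)) has_real_derivative x t \<bullet> (P *v x') + x' \<bullet> (P *v x t)) (at t)"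
proof -
  have "((\<lambda>s. P *v x s) has_vector_derivative P *v x') (at t)"
    by (rule bounded_linear.has_vector_derivative[OF matrix_vector_mul_bounded_linear assms])
  from bounded_bilinear.has_vector_derivative[OF bounded_bilinear_inner assms this]
  show ?thesis by (simp add: has_real_derivative_iff_has_vector_derivative)
qed

locale SL_rep =
  fixes \<rho> :: "real^'n^'n \<Rightarrow> real^'m^'m"
  assumes smooth: "smooth_on_subset SLn \<rho>"
    and hom: "\<And>g h. g \<in> SLn \<Longrightarrow> h \<in> SLn \<Longrightarrow> \<rho> (g ** h) = \<rho> g ** \<rho> h"
    and into_SL: "\<And>g. g \<in> SLn \<Longrightarrow> det (\<rho> g) = 1"
begin

lemma rho_mat_1 [simp]: "\<rho> (mat 1) = mat 1"
proof -
  let ?R = "\<rho> (mat 1)"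
  have "invertible ?R" using into_SL[OF mat_1_in_SLn] by (simp add: invertible_det_nz)
  have "?R = matrix_inv ?R ** (?R ** ?R)"
    using \<open>invertible ?R\<close> by (simp add: matrix_mul_assoc matrix_inv_left)
  also have "\<dots> = mat 1"
    using hom[OF mat_1_in_SLn mat_1_in_SLn] \<open>invertible ?R\<close> by (simp add: matrix_inv_left)
  finally show ?thesis .
qed

lemma linear_derivative_along_lie_alg_SLn:
  obtains L where "linear L"
    and "\<And>\<xi>. \<xi> \<in> lie_alg SLn \<Longrightarrow> ((\<lambda>t. \<rho> (mexp (t *\<^sub>R \<xi>))) has_vector_derivative L \<xi>) (at 0)"
proof -
  obtain U f where U: "mat 1 \<in> U" "smooth_on U f" "\<And>y. y \<in> U \<inter> SLn \<Longrightarrow> f y = \<rho> y"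
    using smooth mat_1_in_SLn unfolding smooth_on_subset_def by metis
  have "open U" using U(2) unfolding smooth_on_def by blast
  have "iter_dd [] f differentiable (at (mat 1))" using U(1,2) unfolding smooth_on_def by blast
  then have "f differentiable (at (mat 1))" by simp
  then have f': "(f has_derivative frechet_derivative f (at (mat 1))) (at (mat 1))"
    using frechet_derivative_works by blast
  define L where "L = frechet_derivative f (at (mat 1))"
  have "linear L" using f' has_derivative_linear L_def by blast
  moreover have "((\<lambda>t. \<rho> (mexp (t *\<^sub>R \<xi>))) has_vector_derivative L \<xi>) (at 0)"
    if \<xi>: "\<xi> \<in> lie_alg SLn" for \<xi>
  proof -
    have "((\<lambda>t. mexp (t *\<^sub>R \<xi>)) has_derivative (\<lambda>h. h *\<^sub>R \<xi>)) (at 0)"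
      using has_vector_derivative_mexp[of \<xi> 0] by (simp add: has_vector_derivative_def)
    from diff_chain_at[OF this, of f L] f'
    have "((\<lambda>t. f (mexp (t *\<^sub>R \<xi>))) has_vector_derivative L \<xi>) (at 0)"
      using \<open>linear L\<close> by (simp add: L_def has_vector_derivative_def o_def linear_scale)
    moreover have "open ((\<lambda>t. mexp (t *\<^sub>R \<xi>)) -` U)"
      using continuous_on_open_vimage[of UNIV "\<lambda>t. mexp (t *\<^sub>R \<xi>)"] continuous_on_mexp
        \<open>open U\<close> by auto
    ultimately show ?thesis
      by (rule has_vector_derivative_transform_within_open) (use U \<xi> in \<open>auto simp: lie_alg_def\<close>)
  qed
  ultimately show ?thesis by (rule that)
qed

lemma has_vector_derivative_drho:
  assumes "\<xi> \<in> lie_alg SLn"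
  shows "((\<lambda>t. \<rho> (mexp (t *\<^sub>R \<xi>))) has_vector_derivative drho \<rho> \<xi>) (at 0)"
proof -
  obtain L where "\<And>\<xi>. \<xi> \<in> lie_alg SLn \<Longrightarrow>
      ((\<lambda>t. \<rho> (mexp (t *\<^sub>R \<xi>))) has_vector_derivative L \<xi>) (at 0)"
    using linear_derivative_along_lie_alg_SLn by blast
  from this[OF assms] show ?thesis
    unfolding drho_def by (simp add: vector_derivative_at)
qed

lemma drho_linear_combination:
  assumes "\<xi> \<in> lie_alg SLn" "\<eta> \<in> lie_alg SLn" "a *\<^sub>R \<xi> + b *\<^sub>R \<eta> \<in> lie_alg SLn"
  shows "drho \<rho> (a *\<^sub>R \<xi> + b *\<^sub>R \<eta>) = a *\<^sub>R drho \<rho> \<xi> + b *\<^sub>R drho \<rho> \<eta>"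
proof -
  obtain L where "linear L"
    and L: "\<And>\<xi>. \<xi> \<in> lie_alg SLn \<Longrightarrow> ((\<lambda>t. \<rho> (mexp (t *\<^sub>R \<xi>))) has_vector_derivative L \<xi>) (at 0)"
    using linear_derivative_along_lie_alg_SLn by blast
  have "drho \<rho> \<zeta> = L \<zeta>" if "\<zeta> \<in> lie_alg SLn" for \<zeta>
    using L[OF that] has_vector_derivative_drho[OF that] vector_derivative_unique_at by blast
  with assms \<open>linear L\<close> show ?thesis by (simp add: linear_add linear_scale)
qed

lemma has_vector_derivative_orbit:
  assumes "\<xi> \<in> lie_alg SLn"
  shows "((\<lambda>s. \<rho> (mexp (s *\<^sub>R \<xi>)) *v v) has_vector_derivative
      \<rho> (mexp (t *\<^sub>R \<xi>)) *v (drho \<rho> \<xi> *v v)) (at t)"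
proof -
  define h where "h r = \<rho> (mexp (r *\<^sub>R \<xi>)) *v v" for r
  have h': "(h has_vector_derivative drho \<rho> \<xi> *v v) (at ((\<lambda>s. s - t) t))"
    unfolding h_def
    using bounded_linear.has_vector_derivative[OF bounded_linear_matrix_vector_mult_left
        has_vector_derivative_drho[OF assms]]
    by simp
  have "((\<lambda>s. s - t) has_vector_derivative 1) (at t)"
    by (auto intro!: derivative_eq_intros)
  from vector_diff_chain_at[OF this h']
  have "((\<lambda>s. h (s - t)) has_vector_derivative drho \<rho> \<xi> *v v) (at t)"
    by (simp add: o_def)
  from bounded_linear.has_vector_derivative[OF matrix_vector_mul_bounded_linear this]
  have "((\<lambda>s. \<rho> (mexp (t *\<^sub>R \<xi>)) *v h (s - t)) has_vector_derivative
      \<rho> (mexp (t *\<^sub>R \<xi>)) *v (drho \<rho> \<xi> *v v)) (at t)" .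
  moreover have "\<rho> (mexp (t *\<^sub>R \<xi>)) *v h (s - t) = \<rho> (mexp (s *\<^sub>R \<xi>)) *v v" for s
  proof -
    have "mexp (s *\<^sub>R \<xi>) = mexp (t *\<^sub>R \<xi>) ** mexp ((s - t) *\<^sub>R \<xi>)"
      using mexp_scaleR_add[of t "s - t" \<xi>] by simp
    then show ?thesis using hom assms by (simp add: h_def lie_alg_def matrix_vector_mul_assoc)
  qed
  ultimately show ?thesis by simp
qed

lemma lie_alg_stab_iff:
  assumes "\<xi> \<in> lie_alg SLn"
  shows "\<xi> \<in> lie_alg (stab \<rho> v) \<longleftrightarrow> drho \<rho> \<xi> *v v = 0"
proof
  assume "\<xi> \<in> lie_alg (stab \<rho> v)"
  then have "(\<lambda>s. \<rho> (mexp (s *\<^sub>R \<xi>)) *v v) = (\<lambda>s. v)" by (auto simp: lie_alg_def stab_def)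
  then have "((\<lambda>s. v) has_vector_derivative drho \<rho> \<xi> *v v) (at 0)"
    using has_vector_derivative_orbit[OF assms, of v 0] by simp
  then show "drho \<rho> \<xi> *v v = 0"
    using has_vector_derivative_const vector_derivative_unique_at by blast
next
  assume "drho \<rho> \<xi> *v v = 0"
  then have "((\<lambda>s. \<rho> (mexp (s *\<^sub>R \<xi>)) *v v) has_derivative (\<lambda>_. 0)) (at t within UNIV)" for t
    using has_vector_derivative_orbit[OF assms, of v t] by (simp add: has_vector_derivative_def)
  then have "\<exists>c. \<forall>s\<in>UNIV. \<rho> (mexp (s *\<^sub>R \<xi>)) *v v = c"
    by (intro has_derivative_zero_constant) simp_all
  then obtain c where c: "\<And>s. \<rho> (mexp (s *\<^sub>R \<xi>)) *v v = c" by blast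
  from c[of 0] have "c = v" by simp
  with c show "\<xi> \<in> lie_alg (stab \<rho> v)" using assms by (simp add: lie_alg_def stab_def)
qed

lemma similar_in_lie_alg_stab:
  assumes g: "g \<in> SLn" and A: "A \<in> lie_alg (stab \<rho> w)"
  shows "g ** A ** matrix_inv g \<in> lie_alg (stab \<rho> (\<rho> g *v w))"
proof -
  let ?g' = "matrix_inv g"
  have g': "?g' \<in> SLn" "?g' ** g = mat 1"
    using g by (simp_all add: matrix_inv_in_SLn matrix_inv_left SLn_invertible)
  have E: "mexp (t *\<^sub>R A) \<in> SLn" "\<rho> (mexp (t *\<^sub>R A)) *v w = w" for t
    using A by (auto simp: lie_alg_def stab_def)
  have "t *\<^sub>R (g ** A ** ?g') = g ** (t *\<^sub>R A) ** ?g'" for t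
    by (simp add: scalar_matrix_assoc matrix_scalar_ac)
  then have exp: "mexp (t *\<^sub>R (g ** A ** ?g')) = g ** mexp (t *\<^sub>R A) ** ?g'" for t
    using mexp_similar[OF g'(2)] by simp
  have SL: "g ** mexp (t *\<^sub>R A) ** ?g' \<in> SLn" for t
    using g g'(1) E(1) by (simp add: SLn_mult)
  have "\<rho> (g ** mexp (t *\<^sub>R A) ** ?g') *v (\<rho> g *v w) = \<rho> g *v w" for t
  proof -
    have "\<rho> (g ** mexp (t *\<^sub>R A) ** ?g') ** \<rho> g = \<rho> (g ** mexp (t *\<^sub>R A) ** ?g' ** g)"
      by (rule hom[OF SL g, symmetric])
    also have "\<dots> = \<rho> (g ** mexp (t *\<^sub>R A))"
      using g'(2) by (simp add: matrix_mul_assoc[symmetric])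
    also have "\<dots> = \<rho> g ** \<rho> (mexp (t *\<^sub>R A))"
      by (rule hom[OF g E(1)])
    finally show ?thesis by (metis E(2) matrix_vector_mul_assoc)
  qed
  then show ?thesis using exp SL by (simp add: lie_alg_def stab_def)
qed

text \<open>The SO(n)-orbit of v lies in the null cone of P = d\<rho>(C); differentiating along the
  rotations exp(sK), K = (C - C^T)/2, where d\<rho>(K) = (P - P^T)/2, gives -|P^T v|^2/2 = 0.\<close>

lemma transpose_drho_annihilates:
  assumes C: "C \<in> lie_alg SLn"
    and transp: "drho \<rho> (transpose C) = transpose (drho \<rho> C)"
    and Pv: "drho \<rho> C *v v = 0"
    and orbit: "\<And>k. k \<in> SOn \<Longrightarrow> (\<rho> k *v v) \<bullet> (drho \<rho> C *v (\<rho> k *v v)) = 0"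
  shows "transpose (drho \<rho> C) *v v = 0"
proof -
  define P where "P = drho \<rho> C"
  define K where "K = (1/2) *\<^sub>R C + (- 1/2) *\<^sub>R transpose C"
  have "transpose K = - K" by (simp add: K_def transpose_scalar vec_eq_iff transpose_def)
  then have K_SO: "K \<in> lie_alg SOn" by (rule skew_in_lie_alg_SOn)
  then have "K \<in> lie_alg SLn" using lie_alg_mono[OF SOn_subset_SLn] by blast
  then have dK: "drho \<rho> K = (1/2) *\<^sub>R P + (- 1/2) *\<^sub>R transpose P"
    using drho_linear_combination[OF C transpose_in_lie_alg_SLn[OF C], of "1/2" "- 1/2"] transp
    by (simp add: K_def P_def)
  define y where "y = drho \<rho> K *v v"
  have "((\<lambda>s. (\<rho> (mexp (s *\<^sub>R K)) *v v) \<bullet> (P *v (\<rho> (mexp (s *\<^sub>R K)) *v v)))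
      has_real_derivative v \<bullet> (P *v y) + y \<bullet> (P *v v)) (at 0)"
    using has_real_derivative_quadratic_form[OF
        has_vector_derivative_orbit[OF \<open>K \<in> lie_alg SLn\<close>, of v 0], where P = P]
    by (simp add: y_def)
  moreover have "(\<lambda>s. (\<rho> (mexp (s *\<^sub>R K)) *v v) \<bullet> (P *v (\<rho> (mexp (s *\<^sub>R K)) *v v))) = (\<lambda>s. 0)"
    using orbit K_SO by (simp add: lie_alg_def P_def)
  ultimately have "((\<lambda>s. 0) has_real_derivative v \<bullet> (P *v y)) (at 0)"
    using Pv by (simp add: P_def)
  then have "v \<bullet> (P *v y) = 0" using DERIV_unique[OF _ DERIV_const] by blast
  moreover have "v \<bullet> (P *v y) = (transpose P *v v) \<bullet> y"
    by (simp add: dot_lmul_matrix[symmetric])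
  moreover have "y = (- 1/2) *\<^sub>R (transpose P *v v)"
  proof -
    have "y = (1/2) *\<^sub>R (P *v v) + (- 1/2) *\<^sub>R (transpose P *v v)"
      by (simp only: y_def dK matrix_vector_mult_add_rdistrib scaleR_matrix_vector_assoc)
    then show ?thesis using Pv by (simp add: P_def)
  qed
  ultimately show ?thesis by (simp add: P_def)
qed

end

locale orthogonal_SL_rep = SL_rep +
  assumes inv_norm: "\<And>k v. k \<in> SOn \<Longrightarrow> norm (\<rho> k *v v) = norm v"
    and drho_transpose: "\<And>\<xi>. \<xi> \<in> sln \<Longrightarrow> drho \<rho> (transpose \<xi>) = transpose (drho \<rho> \<xi>)"
begin

text \<open>F is well defined: two matrices of SL(n) with the same g^T g differ by a rotation.\<close>

lemma Ffun_transpose_mult_self: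
  assumes g: "g \<in> SLn"
  shows "Ffun \<rho> w (transpose g ** g) = (norm (\<rho> g *v w))\<^sup>2"
proof -
  define h where "h = (SOME h. h \<in> SLn \<and> transpose h ** h = transpose g ** g)"
  have h: "h \<in> SLn" "transpose h ** h = transpose g ** g"
    unfolding h_def using someI[of "\<lambda>h. h \<in> SLn \<and> transpose h ** h = transpose g ** g" g] g
    by auto
  let ?g' = "matrix_inv g"
  have g': "?g' \<in> SLn" "g ** ?g' = mat 1" "?g' ** g = mat 1"
    using g by (simp_all add: matrix_inv_in_SLn matrix_inv_right matrix_inv_left SLn_invertible)
  define k where "k = h ** ?g'"
  have "transpose k ** k = transpose ?g' ** (transpose h ** h) ** ?g'"
    by (simp add: k_def matrix_transpose_mul matrix_mul_assoc)
  also have "\<dots> = transpose (g ** ?g') ** (g ** ?g')"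
    by (simp add: h(2) matrix_transpose_mul matrix_mul_assoc)
  finally have "transpose k ** k = mat 1" using g'(2) by simp
  moreover have "det k = 1" using h(1) g'(1) by (simp add: k_def det_mul SLn_def)
  ultimately have k: "k \<in> SOn" by (simp add: SOn_def orthogonal_matrix)
  have "k ** g = h" using g'(3) by (simp add: k_def flip: matrix_mul_assoc)
  then have "\<rho> h = \<rho> k ** \<rho> g" using hom k g SOn_subset_SLn by blast
  then have "norm (\<rho> h *v w) = norm (\<rho> g *v w)"
    using inv_norm[OF k] by (simp flip: matrix_vector_mul_assoc)
  then show ?thesis by (simp add: Ffun_def flip: h_def)
qed

lemma critical_point_form_drho_zero:
  assumes crit: "critical_point_H (Ffun \<rho> w) (transpose g ** g)"
    and g: "g \<in> SLn" and C: "C \<in> lie_alg SLn"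
  shows "(\<rho> g *v w) \<bullet> (drho \<rho> C *v (\<rho> g *v w)) = 0"
proof -
  define v where "v = \<rho> g *v w"
  define m where "m t = mexp (t *\<^sub>R C) ** g" for t
  define \<gamma> where "\<gamma> t = transpose (m t) ** m t" for t
  have m_SL: "m t \<in> SLn" for t using C g by (simp add: m_def lie_alg_def SLn_mult)
  have m': "(m has_vector_derivative mexp (0 *\<^sub>R C) ** C ** g) (at 0)"
    unfolding m_def
    by (rule bounded_linear.has_vector_derivative[OF
          bounded_bilinear.bounded_linear_left[OF bounded_bilinear_matrix_mult]
          has_vector_derivative_mexp])
  have "((\<lambda>t. transpose (m t)) has_vector_derivative transpose (mexp (0 *\<^sub>R C) ** C ** g)) (at 0)"
    by (rule bounded_linear.has_vector_derivative[OF bounded_linear_transpose m'])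
  from bounded_bilinear.has_vector_derivative[OF bounded_bilinear_matrix_mult this m']
  have "\<gamma> differentiable (at 0)" unfolding \<gamma>_def by (rule differentiableI_vector)
  moreover have "\<gamma> t \<in> Hspace" for t using m_SL by (simp add: \<gamma>_def Hspace_eq)
  moreover have "\<gamma> 0 = transpose g ** g" by (simp add: \<gamma>_def m_def)
  ultimately have F': "((\<lambda>t. Ffun \<rho> w (\<gamma> t)) has_real_derivative 0) (at 0)"
    using crit unfolding critical_point_H_def by blast
  have F_eq: "Ffun \<rho> w (\<gamma> t) = (\<rho> (mexp (t *\<^sub>R C)) *v v) \<bullet> (mat 1 *v (\<rho> (mexp (t *\<^sub>R C)) *v v))"
    for t
  proof -
    have "\<rho> (m t) = \<rho> (mexp (t *\<^sub>R C)) ** \<rho> g" using C g by (simp add: m_def hom lie_alg_def)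
    then show ?thesis using Ffun_transpose_mult_self[OF m_SL]
      by (simp add: \<gamma>_def v_def matrix_vector_mul_assoc power2_norm_eq_inner)
  qed
  have "((\<lambda>t. (\<rho> (mexp (t *\<^sub>R C)) *v v) \<bullet> (mat 1 *v (\<rho> (mexp (t *\<^sub>R C)) *v v)))
      has_real_derivative v \<bullet> (drho \<rho> C *v v) + (drho \<rho> C *v v) \<bullet> v) (at 0)"
    using has_real_derivative_quadratic_form[OF
        has_vector_derivative_orbit[OF C, of v 0], where P = "mat 1"] by simp
  then have "((\<lambda>t. Ffun \<rho> w (\<gamma> t)) has_real_derivative 2 * (v \<bullet> (drho \<rho> C *v v))) (at 0)"
    by (simp add: F_eq inner_commute[of "drho \<rho> C *v v"])
  from DERIV_unique[OF this F'] show ?thesis by (simp add: v_def)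
qed

lemma transpose_in_lie_alg_stab_at_critical_point:
  assumes crit: "critical_point_H (Ffun \<rho> w) (transpose g ** g)" and g: "g \<in> SLn"
    and C: "C \<in> lie_alg (stab \<rho> (\<rho> g *v w))"
  shows "transpose C \<in> lie_alg (stab \<rho> (\<rho> g *v w))"
proof -
  define v where "v = \<rho> g *v w"
  have C_SL: "C \<in> lie_alg SLn" using C lie_alg_mono[OF stab_subset_SLn] by blast
  have Cv: "drho \<rho> C *v v = 0" using C lie_alg_stab_iff[OF C_SL] by (simp add: v_def)
  have "(\<rho> k *v v) \<bullet> (drho \<rho> C *v (\<rho> k *v v)) = 0" if k: "k \<in> SOn" for k
  proof -
    have "k ** g \<in> SLn" using k g SOn_subset_SLn SLn_mult by blast
    moreover have "transpose (k ** g) ** (k ** g) = transpose g ** g"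
      using k by (simp add: SOn_def orthogonal_matrix matrix_transpose_mul matrix_mul_assoc
          flip: matrix_mul_assoc[of "transpose g"])
    ultimately show ?thesis
      using critical_point_form_drho_zero[of w "k ** g" C] crit C_SL k g SOn_subset_SLn
      by (auto simp: v_def hom matrix_vector_mul_assoc)
  qed
  then have "transpose (drho \<rho> C) *v v = 0"
    using transpose_drho_annihilates C_SL Cv drho_transpose lie_alg_SLn_subset_sln by blast
  then show ?thesis
    using lie_alg_stab_iff transpose_in_lie_alg_SLn[OF C_SL] drho_transpose lie_alg_SLn_subset_sln C_SL
    by (auto simp: v_def)
qed

end

theorem lemma1:
  fixes \<rho> :: "real^'n^'n \<Rightarrow> real^'m^'m" and w :: "real^'m" and H :: "real^'n^'n"
  assumes smooth: "smooth_on_subset SLn \<rho>"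
    and hom: "\<And>g h. g \<in> SLn \<Longrightarrow> h \<in> SLn \<Longrightarrow> \<rho> (g ** h) = \<rho> g ** \<rho> h"
    and into_SL: "\<And>g. g \<in> SLn \<Longrightarrow> det (\<rho> g) = 1"
    and inv_norm: "\<And>k v. k \<in> SOn \<Longrightarrow> norm (\<rho> k *v v) = norm v"
    and transp: "\<And>\<xi>. \<xi> \<in> sln \<Longrightarrow> drho \<rho> (transpose \<xi>) = transpose (drho \<rho> \<xi>)"
    and crit: "critical_point_H (Ffun \<rho> w) H"
  shows "\<forall>A \<in> lie_alg (stab \<rho> w). matrix_inv H ** transpose A ** H \<in> lie_alg (stab \<rho> w)"
proof
  fix A assume A: "A \<in> lie_alg (stab \<rho> w)"
  interpret orthogonal_SL_rep \<rho> by unfold_locales (fact smooth hom into_SL inv_norm transp)+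
  have "H \<in> Hspace" using crit by (simp add: critical_point_H_def)
  then obtain g where g: "g \<in> SLn" and H: "H = transpose g ** g" by (auto simp: Hspace_eq)
  let ?g' = "matrix_inv g"
  have "g ** A ** ?g' \<in> lie_alg (stab \<rho> (\<rho> g *v w))"
    using g A by (rule similar_in_lie_alg_stab)
  then have "transpose (g ** A ** ?g') \<in> lie_alg (stab \<rho> (\<rho> g *v w))"
    using crit g by (simp add: H transpose_in_lie_alg_stab_at_critical_point)
  then have "?g' ** transpose (g ** A ** ?g') ** matrix_inv ?g'
      \<in> lie_alg (stab \<rho> (\<rho> ?g' *v (\<rho> g *v w)))"
    by (rule similar_in_lie_alg_stab[OF matrix_inv_in_SLn[OF g]])
  moreover have "\<rho> ?g' *v (\<rho> g *v w) = w"
    using g by (simp add: matrix_vector_mul_assoc matrix_inv_in_SLn matrix_inv_left SLn_invertible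
        flip: hom)
  moreover have "?g' ** transpose (g ** A ** ?g') ** matrix_inv ?g' = matrix_inv H ** transpose A ** H"
    using SLn_invertible[OF g]
    by (simp add: H matrix_inv_transpose_mult matrix_transpose_mul matrix_mul_assoc
        matrix_inv_matrix_inv)
  ultimately show "matrix_inv H ** transpose A ** H \<in> lie_alg (stab \<rho> w)" by simp
qed

end
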